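(* Let $f:\mathbb{R}^2\to\mathbb{R}^2$ be $f(x,y)=(2x,\tfrac{1}{2}y)$ and let $g:\mathbb{R}^2\to\mathbb{R}^2$ be a homeomorphism topologically conjugate to $f$ (i.e. $g=h\circ f\circ h^{-1}$ for some homeomorphism $h$ of $\mathbb{R}^2$). Then $g$ does not satisfy the topological shadowing property.
   Context: Let $(X,d)$ be a metric space and $f:X\to X$ a homeomorphism; $\mathcal{C}^+=\{\epsilon:X\to\mathbb{R}^+ : \epsilon \text{ continuous}\}$. For $\delta\in\mathcal{C}^+$, a sequence $\{x_n\}_{n\in\mathbb{Z}}\subset X$ is a $\delta$-pseudo-orbit of $f$ if $d(f(x_n),x_{n+1})<\delta(f(x_n))$ for every $n\in\mathbb{Z}$. For $\epsilon\in\mathcal{C}^+$, the sequence $\{x_n\}$ is $\epsilon$-shadowed by an orbit if there is $y\in X$ with $d(f^n(y),x_n)<\epsilon(x_n)$ for every $n\in\mathbb{Z}$. The homeomorphism $f$ satisfies the topological shadowing property if for every $\epsilon\in\mathcal{C}^+$ there exists $\delta\in\mathcal{C}^+$ such that every $\delta$-pseudo-orbit is $\epsilon$-shadowed by an orbit. $\mathbb{R}^2$ carries the Euclidean metric. *)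

theory Defs
  imports "HOL-Analysis.Analysis"
begin

definition int_iter :: "('a \<Rightarrow> 'a) \<Rightarrow> int \<Rightarrow> 'a \<Rightarrow> 'a" where
  "int_iter f n = (if 0 \<le> n then f ^^ nat n else inv f ^^ nat (- n))"

definition pos_cont :: "('a::metric_space \<Rightarrow> real) \<Rightarrow> bool" where
  "pos_cont e \<longleftrightarrow> continuous_on UNIV e \<and> (\<forall>x. 0 < e x)"

definition pseudo_orbit :: "('a::metric_space \<Rightarrow> 'a) \<Rightarrow> ('a \<Rightarrow> real) \<Rightarrow> (int \<Rightarrow> 'a) \<Rightarrow> bool" where
  "pseudo_orbit f \<delta> xs \<longleftrightarrow> (\<forall>n. dist (f (xs n)) (xs (n + 1)) < \<delta> (f (xs n)))"

definition shadowed :: "('a::metric_space \<Rightarrow> 'a) \<Rightarrow> ('a \<Rightarrow> real) \<Rightarrow> (int \<Rightarrow> 'a) \<Rightarrow> bool" where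
  "shadowed f \<epsilon> xs \<longleftrightarrow> (\<exists>y. \<forall>n. dist (int_iter f n y) (xs n) < \<epsilon> (xs n))"

definition topological_shadowing :: "('a::metric_space \<Rightarrow> 'a) \<Rightarrow> bool" where
  "topological_shadowing f \<longleftrightarrow>
     (\<forall>\<epsilon>. pos_cont \<epsilon> \<longrightarrow>
        (\<exists>\<delta>. pos_cont \<delta> \<and> (\<forall>xs. pseudo_orbit f \<delta> xs \<longrightarrow> shadowed f \<epsilon> xs)))"

end

theory Submission
  imports Defs
begin

text \<open>Choose the tolerance
  \<open>\<epsilon> \<le> 1\<close> so small along the image of the stable ray \<open>{0} \<times> [1, \<infinity>)\<close> that being
  \<open>\<epsilon>\<close>-close to it forces a point into the image of the horn \<open>|x| y\<^sup>2 < 1, y > 1/2\<close>.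
  Whatever \<open>\<delta>\<close> is, the sequence that descends the stable ray, makes one jump off it at time 0
  (small by continuity of \<open>h\<close>) and then escapes along the unstable axis is a \<open>\<delta>\<close>-pseudo-orbit.
  A shadowing orbit stays in the horn in backward time, which forces it onto the stable axis;
  its forward orbit is then bounded, while the pseudo-orbit escapes to infinity at distance
  less than 1 from it, which a homeomorphism of the plane cannot allow.\<close>

lemma int_iter_conj:
  assumes hh': "\<And>y. h (h' y) = y" and h'h: "\<And>x. h' (h x) = x" and "bij k"
  shows "int_iter (h \<circ> k \<circ> h') n = h \<circ> int_iter k n \<circ> h'"
proof -
  have funpow: "(h \<circ> l \<circ> h') ^^ m = h \<circ> l ^^ m \<circ> h'" for l m
    by (induction m) (auto simp: fun_eq_iff hh' h'h)
  have "inv (h \<circ> k \<circ> h') = h \<circ> inv k \<circ> h'"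
    by (rule inv_unique_comp)
      (auto simp: fun_eq_iff hh' h'h bij_is_inj bij_is_surj surj_f_inv_f \<open>bij k\<close>)
  then show ?thesis
    by (simp add: int_iter_def funpow)
qed

lemma shadowed_conj:
  assumes "\<And>y. h (h' y) = y" "\<And>x. h' (h x) = x" "bij k"
  shows "shadowed (h \<circ> k \<circ> h') \<epsilon> (h \<circ> p) \<longleftrightarrow>
    (\<exists>w. \<forall>n. dist (h (int_iter k n w)) (h (p n)) < \<epsilon> (h (p n)))"
  unfolding shadowed_def int_iter_conj[OF assms] by (metis assms(2) comp_apply)

lemma bounded_continuous_image:
  fixes f :: "'a::heine_borel \<Rightarrow> 'b::metric_space"
  assumes "continuous_on UNIV f" "bounded S"
  shows "bounded (f ` S)"
  by (metis assms bounded_closure_image compact_closure compact_continuous_image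
      compact_imp_bounded continuous_on_subset top_greatest)

lemma homeomorphism_bounded_near:
  fixes h :: "'a::heine_borel \<Rightarrow> 'b::heine_borel"
  assumes hom: "homeomorphism UNIV UNIV h h'" and "bounded A"
    and near: "\<And>b. b \<in> B \<Longrightarrow> \<exists>a\<in>A. dist (h a) (h b) < r"
  shows "bounded B"
proof -
  have "bounded (h ` A)"
    using hom \<open>bounded A\<close> by (auto simp: homeomorphism_def intro: bounded_continuous_image)
  then obtain z R where R: "h ` A \<subseteq> cball z R"
    using bounded_subset_cball by blast
  have "h b \<in> cball z (R + r)" if "b \<in> B" for b
  proof -
    obtain a where "a \<in> A" "dist (h a) (h b) < r"
      using near \<open>b \<in> B\<close> by blast
    then show ?thesis
      using R dist_triangle[of z "h b" "h a"] by auto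
  qed
  then have "h ` B \<subseteq> cball z (R + r)"
    by blast
  then have "bounded (h ` B)"
    using bounded_cball bounded_subset by blast
  then have "bounded (h' ` h ` B)"
    using hom by (simp add: homeomorphism_def bounded_continuous_image)
  moreover have "h' ` h ` B = B"
    using hom by (force simp: homeomorphism_def image_iff)
  ultimately show ?thesis by simp
qed

lemma pos_cont_separating:
  fixes A B :: "'a::metric_space set"
  assumes "closed A" "closed B" "A \<inter> B = {}"
  obtains \<epsilon> where "pos_cont \<epsilon>" "\<And>q. \<epsilon> q \<le> 1"
    "\<And>p q. q \<in> B \<Longrightarrow> dist p q < \<epsilon> q \<Longrightarrow> p \<notin> A"
proof (cases "A = {} \<or> B = {}")
  case True
  then show ?thesis
    by (intro that[of "\<lambda>_. 1"]) (auto simp: pos_cont_def)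
next
  case False
  define \<epsilon> where "\<epsilon> q = min 1 (infdist q A + infdist q B)" for q
  have "0 < \<epsilon> q" for q
  proof -
    have "q \<notin> A \<or> q \<notin> B"
      using assms(3) by blast
    then have "0 < infdist q A \<or> 0 < infdist q B"
      using assms(1,2) False infdist_pos_not_in_closed by blast
    then show ?thesis
      using infdist_nonneg[of q A] infdist_nonneg[of q B] by (auto simp: \<epsilon>_def)
  qed
  then have "pos_cont \<epsilon>"
    unfolding pos_cont_def \<epsilon>_def by (auto intro!: continuous_intros continuous_on_infdist)
  moreover have "p \<notin> A" if "q \<in> B" "dist p q < \<epsilon> q" for p q
  proof
    assume "p \<in> A"
    then have "infdist q A \<le> dist p q"
      by (metis infdist_le dist_commute)
    then show False
      using that by (simp add: \<epsilon>_def infdist_zero)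
  qed
  ultimately show ?thesis
    by (intro that) (auto simp: \<epsilon>_def)
qed

definition saddle :: "real \<times> real \<Rightarrow> real \<times> real" where
  "saddle = (\<lambda>(x, y). (2 * x, y / 2))"

lemma inv_saddle: "inv saddle = (\<lambda>(x, y). (x / 2, 2 * y))"
  by (rule inv_unique_comp) (auto simp: saddle_def fun_eq_iff)

lemma bij_saddle: "bij saddle"
  by (rule o_bij[of "\<lambda>(x, y). (x / 2, 2 * y)"]) (auto simp: saddle_def fun_eq_iff)

lemma int_iter_saddle_nonneg: "int_iter saddle (int n) (u, v) = (2 ^ n * u, v / 2 ^ n)"
proof -
  have "(saddle ^^ n) (u, v) = (2 ^ n * u, v / 2 ^ n)"
    by (induction n) (auto simp: saddle_def)
  then show ?thesis
    by (simp add: int_iter_def)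
qed

lemma int_iter_saddle_neg: "int_iter saddle (- int n) (u, v) = (u / 2 ^ n, 2 ^ n * v)"
proof -
  have "(inv saddle ^^ n) (u, v) = (u / 2 ^ n, 2 ^ n * v)"
    by (induction n) (auto simp: inv_saddle)
  then show ?thesis
    by (cases "n = 0") (simp_all add: int_iter_def)
qed

definition stable_ray :: "(real \<times> real) set" where
  "stable_ray = {(0, y) | y. 1 \<le> y}"

text \<open>A neighbourhood of the stable ray of width about \<open>1 / y\<^sup>2\<close>: it shrinks faster than
  backward iteration of the saddle spreads points off the stable axis.\<close>
definition horn :: "(real \<times> real) set" where
  "horn = {(x, y). 1 / 2 < y \<and> \<bar>x\<bar> * y\<^sup>2 < 1}"

lemma open_horn: "open horn"
proof -
  have "horn = {p. 1 / 2 < snd p} \<inter> {p. \<bar>fst p\<bar> * (snd p)\<^sup>2 < 1}"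
    by (auto simp: horn_def)
  also have "open \<dots>"
    by (intro open_Int open_Collect_less continuous_intros)
  finally show ?thesis .
qed

lemma closed_stable_ray: "closed stable_ray"
proof -
  have "stable_ray = {p. fst p = 0} \<inter> {p. 1 \<le> snd p}"
    by (force simp: stable_ray_def)
  also have "closed \<dots>"
    by (intro closed_Int closed_Collect_eq closed_Collect_le continuous_intros)
  finally show ?thesis .
qed

lemma stable_ray_subset_horn: "stable_ray \<subseteq> horn"
  by (auto simp: stable_ray_def horn_def)

lemma backward_orbit_in_horn:
  assumes "\<And>n. int_iter saddle (- int n) (u, v) \<in> horn"
  shows "u = 0"
proof (rule ccontr)
  assume "u \<noteq> 0"
  have "1 / 2 < v"
    using assms[of 0] by (simp add: horn_def int_iter_def)
  then have "1 \<le> 4 * v\<^sup>2"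
    using power_mono[of "1 / 2" v 2] by (simp add: power2_eq_square)
  obtain n where "4 / \<bar>u\<bar> < (2::real) ^ n"
    using real_arch_pow[of 2 "4 / \<bar>u\<bar>"] by auto
  then have "4 < \<bar>u\<bar> * 2 ^ n"
    using \<open>u \<noteq> 0\<close> by (simp add: field_simps)
  also have "\<dots> \<le> 4 * (\<bar>u\<bar> * 2 ^ n * v\<^sup>2)"
    using mult_left_mono[OF \<open>1 \<le> 4 * v\<^sup>2\<close>, of "\<bar>u\<bar> * 2 ^ n"] by (simp add: ac_simps)
  also have "\<bar>u\<bar> * 2 ^ n * v\<^sup>2 = \<bar>u / 2 ^ n\<bar> * (2 ^ n * v)\<^sup>2"
    by (simp add: power2_eq_square field_simps)
  also have "\<dots> < 1"
    using assms[of n] by (simp add: int_iter_saddle_neg horn_def)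
  finally show False by simp
qed

definition jump_orbit :: "real \<Rightarrow> int \<Rightarrow> real \<times> real" where
  "jump_orbit c n = (if n \<le> 0 then (0, 2 ^ nat (- n)) else (c * 2 ^ nat n, 1 / 2 ^ nat n))"

lemma saddle_jump_orbit:
  assumes "n \<noteq> 0"
  shows "saddle (jump_orbit c n) = jump_orbit c (n + 1)"
proof (cases "n < 0")
  case True
  then have "nat (- n) = Suc (nat (- (n + 1)))"
    by linarith
  then show ?thesis
    using True by (simp add: jump_orbit_def saddle_def)
next
  case False
  then have "nat (n + 1) = Suc (nat n)"
    using assms by linarith
  then show ?thesis
    using False assms by (simp add: jump_orbit_def saddle_def)
qed

lemma jump_orbit_unbounded:
  assumes "c > 0"
  shows "\<not> bounded (jump_orbit c ` {0..})"
proof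
  assume "bounded (jump_orbit c ` {0..})"
  then obtain B where B: "\<And>n. n \<ge> 0 \<Longrightarrow> norm (jump_orbit c n) \<le> B"
    by (auto simp: bounded_iff)
  obtain n where "B / c < (2::real) ^ n"
    using real_arch_pow[of 2 "B / c"] by auto
  then have "B < c * 2 ^ n"
    using assms by (simp add: field_simps)
  also have "\<dots> < c * 2 ^ Suc n"
    using assms by simp
  also have "c * 2 ^ Suc n = \<bar>fst (jump_orbit c (int (Suc n)))\<bar>"
    using assms by (simp add: jump_orbit_def del: of_nat_Suc)
  also have "\<dots> \<le> norm (jump_orbit c (int (Suc n)))"
    by (metis fst_conv norm_fst_le prod.collapse real_norm_def)
  finally show False
    using B[of "int (Suc n)"] by simp
qed

lemma pseudo_orbit_jump_orbit:
  assumes h'h: "\<And>x. h' (h x) = x" and "continuous_on UNIV h" and "pos_cont \<delta>"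
  obtains c where "c > 0" "pseudo_orbit (h \<circ> saddle \<circ> h') \<delta> (h \<circ> jump_orbit c)"
proof -
  have "0 < \<delta> (h (0, 1 / 2))"
    using \<open>pos_cont \<delta>\<close> by (simp add: pos_cont_def)
  then obtain \<eta> where "\<eta> > 0"
    and \<eta>: "\<And>w. dist w (0, 1 / 2) < \<eta> \<Longrightarrow> dist (h w) (h (0, 1 / 2)) < \<delta> (h (0, 1 / 2))"
    using \<open>continuous_on UNIV h\<close> unfolding continuous_on_iff by blast
  define c where "c = \<eta> / 4"
  have "dist (h (saddle (jump_orbit c n))) (h (jump_orbit c (n + 1)))
      < \<delta> (h (saddle (jump_orbit c n)))" for n
  proof (cases "n = 0")
    case True
    have "dist (2 * c, 1 / 2) (0, 1 / 2::real) < \<eta>"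
      using \<open>\<eta> > 0\<close> by (simp add: dist_Pair_Pair c_def)
    then have "dist (h (2 * c, 1 / 2)) (h (0, 1 / 2)) < \<delta> (h (0, 1 / 2))"
      by (rule \<eta>)
    then show ?thesis
      using True by (simp add: jump_orbit_def saddle_def dist_commute mult.commute)
  next
    case False
    then show ?thesis
      using \<open>pos_cont \<delta>\<close> by (simp add: saddle_jump_orbit pos_cont_def)
  qed
  then show ?thesis
    using \<open>\<eta> > 0\<close> by (intro that[of c]) (simp_all add: pseudo_orbit_def h'h c_def)
qed

lemma jump_orbit_not_shadowed:
  fixes h :: "real \<times> real \<Rightarrow> 'a::heine_borel"
  assumes hom: "homeomorphism UNIV UNIV h h'" and "c > 0" and \<epsilon>1: "\<And>q. \<epsilon> q \<le> 1"
    and sep: "\<And>p q. q \<in> h ` stable_ray \<Longrightarrow> dist p q < \<epsilon> q \<Longrightarrow> p \<notin> h ` (- horn)"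
  shows "\<not> shadowed (h \<circ> saddle \<circ> h') \<epsilon> (h \<circ> jump_orbit c)"
proof
  assume "shadowed (h \<circ> saddle \<circ> h') \<epsilon> (h \<circ> jump_orbit c)"
  moreover have hh': "\<And>y. h (h' y) = y" and h'h: "\<And>x. h' (h x) = x"
    using hom by (auto simp: homeomorphism_def)
  ultimately obtain w where
    "\<And>n. dist (h (int_iter saddle n w)) (h (jump_orbit c n)) < \<epsilon> (h (jump_orbit c n))"
    unfolding shadowed_conj[OF hh' h'h bij_saddle] by blast
  moreover obtain u v where "w = (u, v)"
    by fastforce
  ultimately have shadow:
    "\<And>n. dist (h (int_iter saddle n (u, v))) (h (jump_orbit c n)) < \<epsilon> (h (jump_orbit c n))"
    by simp
  have "int_iter saddle (- int n) (u, v) \<in> horn" for n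
  proof -
    have "jump_orbit c (- int n) \<in> stable_ray"
      by (simp add: jump_orbit_def stable_ray_def)
    then have "h (int_iter saddle (- int n) (u, v)) \<notin> h ` (- horn)"
      using sep[OF imageI shadow] by simp
    then show ?thesis
      by blast
  qed
  then have "u = 0"
    by (rule backward_orbit_in_horn)
  have "bounded (jump_orbit c ` {0..})"
  proof (rule homeomorphism_bounded_near[OF hom bounded_cball[of 0 "\<bar>v\<bar>"]])
    fix b
    assume "b \<in> jump_orbit c ` {0..}"
    then obtain n :: nat where b: "b = jump_orbit c (int n)"
      by (auto intro: nonneg_int_cases)
    have "(0::real, v / 2 ^ n) \<in> cball 0 \<bar>v\<bar>"
      by (simp add: dist_norm norm_Pair divide_le_eq mult_le_cancel_left1)
    moreover have "dist (h (0, v / 2 ^ n)) (h b) < 1"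
      using shadow[of "int n"] \<epsilon>1[of "h b"] b \<open>u = 0\<close> by (simp add: int_iter_saddle_nonneg)
    ultimately show "\<exists>a\<in>cball 0 \<bar>v\<bar>. dist (h a) (h b) < 1" ..
  qed
  with jump_orbit_unbounded[OF \<open>c > 0\<close>] show False
    by contradiction
qed

lemma jump_orbits_not_shadowed:
  fixes h :: "real \<times> real \<Rightarrow> 'a::heine_borel"
  assumes hom: "homeomorphism UNIV UNIV h h'"
  shows "\<exists>\<epsilon>. pos_cont \<epsilon> \<and>
    (\<forall>c > 0. \<not> shadowed (h \<circ> saddle \<circ> h') \<epsilon> (h \<circ> jump_orbit c))"
proof -
  have closed_image: "closed (h ` S)" if "closed S" for S
    using homeomorphism_imp_closed_map[OF hom] that
    by (metis closed_closedin subtopology_UNIV)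
  have "inj h"
    using hom unfolding homeomorphism_def by (metis injI UNIV_I)
  then have "h ` (- horn) \<inter> h ` stable_ray = h ` (- horn \<inter> stable_ray)"
    by (rule image_Int[symmetric])
  also have "\<dots> = {}"
    using stable_ray_subset_horn by blast
  finally have disjoint: "h ` (- horn) \<inter> h ` stable_ray = {}" .
  obtain \<epsilon> where "pos_cont \<epsilon>" and \<epsilon>_le_1: "\<And>q. \<epsilon> q \<le> 1"
    and sep: "\<And>p q. q \<in> h ` stable_ray \<Longrightarrow> dist p q < \<epsilon> q \<Longrightarrow> p \<notin> h ` (- horn)"
    using pos_cont_separating[OF closed_image[OF closed_Compl[OF open_horn]]
        closed_image[OF closed_stable_ray] disjoint] by blast
  show ?thesis
  proof (intro exI conjI allI impI)
    show "pos_cont \<epsilon>" by fact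
    show "\<not> shadowed (h \<circ> saddle \<circ> h') \<epsilon> (h \<circ> jump_orbit c)" if "c > 0" for c
      using jump_orbit_not_shadowed[OF hom that \<epsilon>_le_1 sep] .
  qed
qed

theorem mainTheorem4:
  fixes f g h h' :: "real \<times> real \<Rightarrow> real \<times> real"
  assumes "\<And>x y. f (x, y) = (2 * x, y / 2)"
    and "homeomorphism UNIV UNIV h h'"
    and "g = h \<circ> f \<circ> h'"
  shows "\<not> topological_shadowing g"
proof
  assume "topological_shadowing g"
  moreover have "f = saddle"
    using assms(1) by (auto simp: saddle_def fun_eq_iff)
  ultimately have "topological_shadowing (h \<circ> saddle \<circ> h')"
    using assms(3) by simp
  moreover obtain \<epsilon> where "pos_cont \<epsilon>"
    and not_shadowed: "\<And>c. c > 0 \<Longrightarrow> \<not> shadowed (h \<circ> saddle \<circ> h') \<epsilon> (h \<circ> jump_orbit c)"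
    using jump_orbits_not_shadowed[OF assms(2)] by blast
  ultimately obtain \<delta> where "pos_cont \<delta>" and shadows:
      "\<And>xs. pseudo_orbit (h \<circ> saddle \<circ> h') \<delta> xs \<Longrightarrow> shadowed (h \<circ> saddle \<circ> h') \<epsilon> xs"
    unfolding topological_shadowing_def by blast
  have h'h: "\<And>x. h' (h x) = x" and "continuous_on UNIV h"
    using assms(2) by (auto simp: homeomorphism_def)
  obtain c where "c > 0" "pseudo_orbit (h \<circ> saddle \<circ> h') \<delta> (h \<circ> jump_orbit c)"
    using pseudo_orbit_jump_orbit[OF h'h \<open>continuous_on UNIV h\<close> \<open>pos_cont \<delta>\<close>] by blast
  with shadows not_shadowed show False
    by blast
qed

end
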